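(* Let $k\in\mathbb{N}$, let $G$ be a digraph and $\mathcal{P}_k=\{V_{ij}:i,j\in[k]\}$ a $k^2$-partition of $V(G)$. Let $\mathcal{Q}$ be a path system all of whose edges lie in $\mathcal{B}_k(\mathcal{P}_k,G)$ such that for all $i\in[k]$, $$\sum_{j\neq i}a_{ij}-\sum_{j\neq i}a_{ji}=|V_{i*}|-|V_{*i}|,$$ where $a_{ij}=|E(\mathcal{Q})\cap E(V_{i*},V_{*j})|$ for $i\neq j$. Then contracting $\mathcal{Q}$ in $G$ with respect to $\mathcal{P}_k$ yields a digraph $G'$ with a $k^2$-partition $\mathcal{P}'_k=\{V'_{ij}:i,j\in[k]\}$ such that $|V'_{i*}|=|V'_{*i}|$ for all $i\in[k]$.
   Context: A path system is a set of vertex-disjoint directed paths. A $k^2$-partition of $V(G)$ is a family $\{V_{ij}:i,j\in[k]\}$ of pairwise disjoint (possibly empty) sets with union $V(G)$; $V_{i*}=\bigcup_jV_{ij}$, $V_{*j}=\bigcup_iV_{ij}$; $E(A,B)$ is the set of edges $ab$ with $a\in A,b\in B$; bad edges $\mathcal{B}_k(\mathcal{P}_k,G)=\bigcup_{i\neq j}E(V_{i*},V_{*j})$. Contraction: for each path $Q\in\mathcal{Q}$ from $u$ to $v$ create a new vertex $x_Q$; $V(G')=(V(G)\setminus V(\mathcal{Q}))\cup\{x_Q\}$. For $y\in V(G')$ put $y^-=y^+=y$ if $y\in V(G)$ and $x_Q^-=u$, $x_Q^+=v$; $yz\in E(G')$ iff $y^+z^-\in E(G)$. The resulting partition $\mathcal{P}'_k$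 has $V'_{ij}$ equal to $V_{ij}\setminus V(\mathcal{Q})$ together with all $x_Q$ for which $Q$ goes from $u\in V_{*j}$ to $v\in V_{i*}$; $V'_{i*},V'_{*j}$ are defined analogously. *)

theory Defs
  imports Main
begin

definition rowset :: "(nat \<Rightarrow> nat \<Rightarrow> 'v set) \<Rightarrow> nat \<Rightarrow> nat \<Rightarrow> 'v set" where
  "rowset P k i = (\<Union>j\<in>{1..k}. P i j)"

definition colset :: "(nat \<Rightarrow> nat \<Rightarrow> 'v set) \<Rightarrow> nat \<Rightarrow> nat \<Rightarrow> 'v set" where
  "colset P k j = (\<Union>i\<in>{1..k}. P i j)"

definition k2_partition :: "'v set \<Rightarrow> nat \<Rightarrow> (nat \<Rightarrow> nat \<Rightarrow> 'v set) \<Rightarrow> bool" where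
  "k2_partition V k P \<longleftrightarrow>
     (\<forall>i\<in>{1..k}. \<forall>j\<in>{1..k}. \<forall>i'\<in>{1..k}. \<forall>j'\<in>{1..k}.
        (i, j) \<noteq> (i', j') \<longrightarrow> P i j \<inter> P i' j' = {}) \<and>
     (\<Union>i\<in>{1..k}. \<Union>j\<in>{1..k}. P i j) = V"

definition Eset :: "('a \<times> 'a) set \<Rightarrow> 'a set \<Rightarrow> 'a set \<Rightarrow> ('a \<times> 'a) set" where
  "Eset E A B = {(a, b) \<in> E. a \<in> A \<and> b \<in> B}"

definition bad_edges :: "('a \<times> 'a) set \<Rightarrow> nat \<Rightarrow> (nat \<Rightarrow> nat \<Rightarrow> 'a set) \<Rightarrow> ('a \<times> 'a) set" where
  "bad_edges E k P = (\<Union>i\<in>{1..k}. \<Union>j\<in>{1..k} - {i}. Eset E (rowset P k i) (colset P k j))"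

definition path_edges :: "'a list \<Rightarrow> ('a \<times> 'a) set" where
  "path_edges p = set (zip p (tl p))"

definition is_dpath :: "'a set \<Rightarrow> ('a \<times> 'a) set \<Rightarrow> 'a list \<Rightarrow> bool" where
  "is_dpath V E p \<longleftrightarrow> p \<noteq> [] \<and> distinct p \<and> set p \<subseteq> V \<and> path_edges p \<subseteq> E"

definition path_system :: "'a set \<Rightarrow> ('a \<times> 'a) set \<Rightarrow> 'a list set \<Rightarrow> bool" where
  "path_system V E Q \<longleftrightarrow> (\<forall>p\<in>Q. is_dpath V E p) \<and>
     (\<forall>p\<in>Q. \<forall>q\<in>Q. p \<noteq> q \<longrightarrow> set p \<inter> set q = {})"

definition sys_vertices :: "'a list set \<Rightarrow> 'a set" where
  "sys_vertices Q = (\<Union>p\<in>Q. set p)"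

definition sys_edges :: "'a list set \<Rightarrow> ('a \<times> 'a) set" where
  "sys_edges Q = (\<Union>p\<in>Q. path_edges p)"

text \<open>Contraction: new vertex for path Q is Inr Q; old vertices are Inl v.\<close>
fun vminus :: "'a + 'a list \<Rightarrow> 'a" where
  "vminus (Inl v) = v"
| "vminus (Inr q) = hd q"

fun vplus :: "'a + 'a list \<Rightarrow> 'a" where
  "vplus (Inl v) = v"
| "vplus (Inr q) = last q"

definition contr_V :: "'a set \<Rightarrow> 'a list set \<Rightarrow> ('a + 'a list) set" where
  "contr_V V Q = Inl ` (V - sys_vertices Q) \<union> Inr ` Q"

definition contr_E :: "'a set \<Rightarrow> ('a \<times> 'a) set \<Rightarrow> 'a list set \<Rightarrow> (('a + 'a list) \<times> ('a + 'a list)) set" where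
  "contr_E V E Q = {(y, z). y \<in> contr_V V Q \<and> z \<in> contr_V V Q \<and> (vplus y, vminus z) \<in> E}"

definition contr_part :: "nat \<Rightarrow> (nat \<Rightarrow> nat \<Rightarrow> 'a set) \<Rightarrow> 'a list set \<Rightarrow> nat \<Rightarrow> nat \<Rightarrow> ('a + 'a list) set" where
  "contr_part k P Q i j = Inl ` (P i j - sys_vertices Q) \<union>
     Inr ` {q \<in> Q. hd q \<in> colset P k j \<and> last q \<in> rowset P k i}"

end

theory Submission
  imports Defs
begin

(* Every vertex of a path is either its last vertex or the tail of exactly one of its edges, and
   likewise either its first vertex or the head of exactly one edge.  As all edges of Q are bad,
   the edges of Q with tail in V_{i*} are exactly those counted by the a_ij with j \<noteq> i.
   Hence |V'_{i*}| = |V_{i*} - V(Q)| + #{paths ending in V_{i*}} = |V_{i*}| - \<Sum>_{j\<noteq>i} a_ij, and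
   dually |V'_{*i}| = |V_{*i}| - \<Sum>_{j\<noteq>i} a_ji, so the balance hypothesis is exactly what
   makes the two agree. *)

lemma card_Int_Un_inj_images:
  assumes "finite X" "finite Y" "inj_on f X" "inj_on g Y" "f ` X \<inter> g ` Y = {}"
  shows "card (A \<inter> (f ` X \<union> g ` Y)) = card {x\<in>X. f x \<in> A} + card {y\<in>Y. g y \<in> A}"
proof -
  have "A \<inter> (f ` X \<union> g ` Y) = f ` {x\<in>X. f x \<in> A} \<union> g ` {y\<in>Y. g y \<in> A}" by blast
  moreover have "f ` {x\<in>X. f x \<in> A} \<inter> g ` {y\<in>Y. g y \<in> A} = {}" using assms(5) by blast
  ultimately show ?thesis
    using assms(1-4) by (simp add: card_Un_disjoint card_image inj_on_subset)
qed

lemma fst_path_edges: "distinct p \<Longrightarrow> fst ` path_edges p = set p - {last p}"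
proof (cases p rule: rev_cases)
  case (snoc xs x)
  then have "map fst (zip p (tl p)) = xs"
    by (simp add: map_fst_zip_take butlast_conv_take min_def)
  then show "distinct p \<Longrightarrow> ?thesis" using snoc by (simp add: path_edges_def flip: set_map)
qed (simp add: path_edges_def)

lemma snd_path_edges: "distinct p \<Longrightarrow> snd ` path_edges p = set p - {hd p}"
  by (cases p) (auto simp: path_edges_def map_snd_zip_take min_def simp flip: set_map)

lemma inj_on_fst_path_edges: "distinct p \<Longrightarrow> inj_on fst (path_edges p)"
  by (auto simp: path_edges_def inj_on_def set_zip nth_eq_iff_index_eq)

lemma inj_on_snd_path_edges: "distinct p \<Longrightarrow> inj_on snd (path_edges p)"
  by (auto simp: path_edges_def inj_on_def set_zip nth_eq_iff_index_eq distinct_tl)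

lemma path_edges_subset: "path_edges p \<subseteq> set p \<times> set p"
  by (cases p) (auto simp: path_edges_def dest: set_zip_leftD set_zip_rightD)

lemma path_systemD:
  assumes "path_system V E Q" "p \<in> Q"
  shows "p \<noteq> []" "distinct p" "set p \<subseteq> V"
  using assms by (auto simp: path_system_def is_dpath_def)

lemma path_system_endpoints:
  assumes "path_system V E Q"
  shows "hd ` Q \<subseteq> V" and "last ` Q \<subseteq> V"
  using path_systemD(1,3)[OF assms] by fastforce+

lemma path_system_common_vertex:
  assumes "path_system V E Q" "p \<in> Q" "q \<in> Q" "x \<in> set p" "x \<in> set q"
  shows "p = q"
  using assms by (auto simp: path_system_def)

lemma finite_path_system:
  assumes "path_system V E Q" "finite V"
  shows "finite Q"
proof -
  have "Q \<subseteq> {xs. set xs \<subseteq> V \<and> length xs \<le> card V}"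
  proof
    fix p assume "p \<in> Q"
    then have "set p \<subseteq> V" "length p = card (set p)"
      using path_systemD[OF assms(1)] by (auto simp: distinct_card)
    then show "p \<in> {xs. set xs \<subseteq> V \<and> length xs \<le> card V}"
      using card_mono[OF assms(2)] by simp
  qed
  then show ?thesis using finite_lists_length_le[OF assms(2)] finite_subset by blast
qed

lemma finite_sys_edges:
  assumes "path_system V E Q" "finite V"
  shows "finite (sys_edges Q)"
proof -
  have "sys_edges Q \<subseteq> V \<times> V"
    using path_systemD(3)[OF assms(1)] path_edges_subset by (fastforce simp: sys_edges_def)
  then show ?thesis using assms(2) finite_subset by blast
qed

lemma card_Int_sys_vertices_last_fst:
  assumes ps: "path_system V E Q" and "finite V"
  shows "card (A \<inter> sys_vertices Q) = card {q\<in>Q. last q \<in> A} + card {e\<in>sys_edges Q. fst e \<in> A}"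
proof -
  have tail: "fst e \<in> set p - {last p}" if "p \<in> Q" "e \<in> path_edges p" for p e
    using that fst_path_edges path_systemD(2)[OF ps] by blast
  have "sys_vertices Q = last ` Q \<union> fst ` sys_edges Q"
  proof -
    have "set p = insert (last p) (fst ` path_edges p)" if "p \<in> Q" for p
      using path_systemD(1,2)[OF ps that] by (simp add: fst_path_edges insert_absorb)
    then show ?thesis by (auto simp: sys_vertices_def sys_edges_def)
  qed
  moreover have "inj_on last Q"
    using path_system_common_vertex[OF ps] path_systemD(1)[OF ps] by (metis inj_onI last_in_set)
  moreover have "inj_on fst (sys_edges Q)"
  proof (rule inj_onI)
    fix e e' assume "e \<in> sys_edges Q" "e' \<in> sys_edges Q" "fst e = fst e'"
    then obtain p p' where "p \<in> Q" "e \<in> path_edges p" "p' \<in> Q" "e' \<in> path_edges p'"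
      by (auto simp: sys_edges_def)
    moreover from this have "p = p'"
      using tail path_system_common_vertex[OF ps] \<open>fst e = fst e'\<close> by (metis DiffD1)
    ultimately show "e = e'"
      using inj_on_fst_path_edges path_systemD(2)[OF ps] \<open>fst e = fst e'\<close> by (metis inj_onD)
  qed
  moreover have "last ` Q \<inter> fst ` sys_edges Q = {}"
  proof -
    have "last q \<noteq> fst e" if "q \<in> Q" "p \<in> Q" "e \<in> path_edges p" for q p e
      using tail[OF that(2,3)] path_system_common_vertex[OF ps that(1,2)] path_systemD(1)[OF ps that(1)]
      by (metis Diff_iff last_in_set singletonI)
    then show ?thesis by (fastforce simp: sys_edges_def)
  qed
  ultimately show ?thesis
    using finite_path_system[OF assms] finite_sys_edges[OF assms] by (simp add: card_Int_Un_inj_images)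
qed

lemma card_Int_sys_vertices_hd_snd:
  assumes ps: "path_system V E Q" and "finite V"
  shows "card (A \<inter> sys_vertices Q) = card {q\<in>Q. hd q \<in> A} + card {e\<in>sys_edges Q. snd e \<in> A}"
proof -
  have head: "snd e \<in> set p - {hd p}" if "p \<in> Q" "e \<in> path_edges p" for p e
    using that snd_path_edges path_systemD(2)[OF ps] by blast
  have "sys_vertices Q = hd ` Q \<union> snd ` sys_edges Q"
  proof -
    have "set p = insert (hd p) (snd ` path_edges p)" if "p \<in> Q" for p
      using path_systemD(1,2)[OF ps that] by (simp add: snd_path_edges insert_absorb)
    then show ?thesis by (auto simp: sys_vertices_def sys_edges_def)
  qed
  moreover have "inj_on hd Q"
    using path_system_common_vertex[OF ps] path_systemD(1)[OF ps] by (metis inj_onI hd_in_set)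
  moreover have "inj_on snd (sys_edges Q)"
  proof (rule inj_onI)
    fix e e' assume "e \<in> sys_edges Q" "e' \<in> sys_edges Q" "snd e = snd e'"
    then obtain p p' where "p \<in> Q" "e \<in> path_edges p" "p' \<in> Q" "e' \<in> path_edges p'"
      by (auto simp: sys_edges_def)
    moreover from this have "p = p'"
      using head path_system_common_vertex[OF ps] \<open>snd e = snd e'\<close> by (metis DiffD1)
    ultimately show "e = e'"
      using inj_on_snd_path_edges path_systemD(2)[OF ps] \<open>snd e = snd e'\<close> by (metis inj_onD)
  qed
  moreover have "hd ` Q \<inter> snd ` sys_edges Q = {}"
  proof -
    have "hd q \<noteq> snd e" if "q \<in> Q" "p \<in> Q" "e \<in> path_edges p" for q p e
      using head[OF that(2,3)] path_system_common_vertex[OF ps that(1,2)] path_systemD(1)[OF ps that(1)]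
      by (metis Diff_iff hd_in_set singletonI)
    then show ?thesis by (fastforce simp: sys_edges_def)
  qed
  ultimately show ?thesis
    using finite_path_system[OF assms] finite_sys_edges[OF assms] by (simp add: card_Int_Un_inj_images)
qed

lemma rowset_disjoint:
  "k2_partition V k P \<Longrightarrow> i \<in> {1..k} \<Longrightarrow> i' \<in> {1..k} \<Longrightarrow> i \<noteq> i'
    \<Longrightarrow> rowset P k i \<inter> rowset P k i' = {}"
  unfolding k2_partition_def rowset_def by blast

lemma colset_disjoint:
  "k2_partition V k P \<Longrightarrow> j \<in> {1..k} \<Longrightarrow> j' \<in> {1..k} \<Longrightarrow> j \<noteq> j'
    \<Longrightarrow> colset P k j \<inter> colset P k j' = {}"
  unfolding k2_partition_def colset_def by blast

lemma UN_rowset: "k2_partition V k P \<Longrightarrow> (\<Union>i\<in>{1..k}. rowset P k i) = V"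
  unfolding k2_partition_def rowset_def by blast

lemma UN_colset: "k2_partition V k P \<Longrightarrow> (\<Union>j\<in>{1..k}. colset P k j) = V"
  unfolding k2_partition_def colset_def by blast

lemma card_bad_edges_from_rowset:
  assumes kp: "k2_partition V k P" and i: "i \<in> {1..k}"
    and "finite F" and "F \<subseteq> bad_edges E k P"
  shows "card {e\<in>F. fst e \<in> rowset P k i}
       = (\<Sum>j\<in>{1..k} - {i}. card (F \<inter> Eset E (rowset P k i) (colset P k j)))"
proof -
  have "{e\<in>F. fst e \<in> rowset P k i} = (\<Union>j\<in>{1..k} - {i}. F \<inter> Eset E (rowset P k i) (colset P k j))"
  proof (intro equalityI subsetI)
    fix e assume e: "e \<in> {e\<in>F. fst e \<in> rowset P k i}"
    then obtain i' j where i': "i' \<in> {1..k}" and j: "j \<in> {1..k} - {i'}"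
      and e': "e \<in> Eset E (rowset P k i') (colset P k j)"
      using assms(4) unfolding bad_edges_def by blast
    have "fst e \<in> rowset P k i'" using e' by (auto simp: Eset_def)
    then have "i' = i" using e rowset_disjoint[OF kp i i'] by blast
    with j e e' show "e \<in> (\<Union>j\<in>{1..k} - {i}. F \<inter> Eset E (rowset P k i) (colset P k j))"
      by blast
  qed (auto simp: Eset_def)
  also have "card \<dots> = (\<Sum>j\<in>{1..k} - {i}. card (F \<inter> Eset E (rowset P k i) (colset P k j)))"
  proof (rule card_UN_disjoint)
    show "\<forall>j\<in>{1..k} - {i}. \<forall>j'\<in>{1..k} - {i}. j \<noteq> j' \<longrightarrow>
        F \<inter> Eset E (rowset P k i) (colset P k j) \<inter> (F \<inter> Eset E (rowset P k i) (colset P k j')) = {}"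
      using colset_disjoint[OF kp] unfolding Eset_def by blast
  qed (use assms(3) in auto)
  finally show ?thesis .
qed

lemma card_bad_edges_into_colset:
  assumes kp: "k2_partition V k P" and i: "i \<in> {1..k}"
    and "finite F" and "F \<subseteq> bad_edges E k P"
  shows "card {e\<in>F. snd e \<in> colset P k i}
       = (\<Sum>j\<in>{1..k} - {i}. card (F \<inter> Eset E (rowset P k j) (colset P k i)))"
proof -
  have "{e\<in>F. snd e \<in> colset P k i} = (\<Union>j\<in>{1..k} - {i}. F \<inter> Eset E (rowset P k j) (colset P k i))"
  proof (intro equalityI subsetI)
    fix e assume e: "e \<in> {e\<in>F. snd e \<in> colset P k i}"
    then obtain j i' where j: "j \<in> {1..k}" and i': "i' \<in> {1..k} - {j}"
      and e': "e \<in> Eset E (rowset P k j) (colset P k i')"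
      using assms(4) unfolding bad_edges_def by blast
    have "snd e \<in> colset P k i'" using e' by (auto simp: Eset_def)
    then have "i' = i" using e i' colset_disjoint[OF kp i, of i'] by blast
    with j i' e e' show "e \<in> (\<Union>j\<in>{1..k} - {i}. F \<inter> Eset E (rowset P k j) (colset P k i))"
      by blast
  qed (auto simp: Eset_def)
  also have "card \<dots> = (\<Sum>j\<in>{1..k} - {i}. card (F \<inter> Eset E (rowset P k j) (colset P k i)))"
  proof (rule card_UN_disjoint)
    show "\<forall>j\<in>{1..k} - {i}. \<forall>j'\<in>{1..k} - {i}. j \<noteq> j' \<longrightarrow>
        F \<inter> Eset E (rowset P k j) (colset P k i) \<inter> (F \<inter> Eset E (rowset P k j') (colset P k i)) = {}"
      using rowset_disjoint[OF kp] unfolding Eset_def by blast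
  qed (use assms(3) in auto)
  finally show ?thesis .
qed

lemma rowset_contr_part:
  assumes "k2_partition V k P" and "hd ` Q \<subseteq> V"
  shows "rowset (contr_part k P Q) k i
       = Inl ` (rowset P k i - sys_vertices Q) \<union> Inr ` {q\<in>Q. last q \<in> rowset P k i}"
proof -
  have "rowset (contr_part k P Q) k i = Inl ` (\<Union>j\<in>{1..k}. P i j - sys_vertices Q)
      \<union> Inr ` (\<Union>j\<in>{1..k}. {q\<in>Q. hd q \<in> colset P k j \<and> last q \<in> rowset P k i})"
    by (simp only: rowset_def contr_part_def UN_Un_distrib image_UN)
  also have "(\<Union>j\<in>{1..k}. P i j - sys_vertices Q) = rowset P k i - sys_vertices Q"
    by (auto simp: rowset_def)
  also have "(\<Union>j\<in>{1..k}. {q\<in>Q. hd q \<in> colset P k j \<and> last q \<in> rowset P k i})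
      = {q\<in>Q. last q \<in> rowset P k i}"
  proof -
    have "\<exists>j\<in>{1..k}. hd q \<in> colset P k j" if "q \<in> Q" for q
      using that assms(2) UN_colset[OF assms(1)] by blast
    then show ?thesis by blast
  qed
  finally show ?thesis .
qed

lemma colset_contr_part:
  assumes "k2_partition V k P" and "last ` Q \<subseteq> V"
  shows "colset (contr_part k P Q) k j
       = Inl ` (colset P k j - sys_vertices Q) \<union> Inr ` {q\<in>Q. hd q \<in> colset P k j}"
proof -
  have "colset (contr_part k P Q) k j = Inl ` (\<Union>i\<in>{1..k}. P i j - sys_vertices Q)
      \<union> Inr ` (\<Union>i\<in>{1..k}. {q\<in>Q. hd q \<in> colset P k j \<and> last q \<in> rowset P k i})"
    by (simp only: colset_def contr_part_def UN_Un_distrib image_UN)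
  also have "(\<Union>i\<in>{1..k}. P i j - sys_vertices Q) = colset P k j - sys_vertices Q"
    by (auto simp: colset_def)
  also have "(\<Union>i\<in>{1..k}. {q\<in>Q. hd q \<in> colset P k j \<and> last q \<in> rowset P k i})
      = {q\<in>Q. hd q \<in> colset P k j}"
  proof -
    have "\<exists>i\<in>{1..k}. last q \<in> rowset P k i" if "q \<in> Q" for q
      using that assms(2) UN_rowset[OF assms(1)] by blast
    then show ?thesis by blast
  qed
  finally show ?thesis .
qed

lemma k2_partition_contr_part:
  assumes kp: "k2_partition V k P" and "hd ` Q \<subseteq> V" and "last ` Q \<subseteq> V"
  shows "k2_partition (contr_V V Q) k (contr_part k P Q)"
  unfolding k2_partition_def
proof (intro conjI ballI impI)
  fix i j i' j' assume ij: "i \<in> {1..k}" "j \<in> {1..k}" "i' \<in> {1..k}" "j' \<in> {1..k}" "(i, j) \<noteq> (i', j')"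
  then have "P i j \<inter> P i' j' = {}" using kp unfolding k2_partition_def by blast
  moreover have "rowset P k i \<inter> rowset P k i' = {} \<or> colset P k j \<inter> colset P k j' = {}"
    using ij rowset_disjoint[OF kp] colset_disjoint[OF kp] by blast
  ultimately show "contr_part k P Q i j \<inter> contr_part k P Q i' j' = {}"
    unfolding contr_part_def by blast
next
  have "(\<Union>i\<in>{1..k}. \<Union>j\<in>{1..k}. contr_part k P Q i j) = (\<Union>i\<in>{1..k}. rowset (contr_part k P Q) k i)"
    by (simp only: rowset_def)
  also have "\<dots> = Inl ` ((\<Union>i\<in>{1..k}. rowset P k i) - sys_vertices Q)
      \<union> Inr ` {q\<in>Q. last q \<in> (\<Union>i\<in>{1..k}. rowset P k i)}"
    unfolding rowset_contr_part[OF kp assms(2)] by blast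
  also have "\<dots> = Inl ` (V - sys_vertices Q) \<union> Inr ` Q"
    unfolding UN_rowset[OF kp] using assms(3) by blast
  finally show "(\<Union>i\<in>{1..k}. \<Union>j\<in>{1..k}. contr_part k P Q i j) = contr_V V Q"
    by (simp add: contr_V_def)
qed

lemma card_rowset_contr_part:
  assumes "finite V" and kp: "k2_partition V k P" and ps: "path_system V E Q"
    and "sys_edges Q \<subseteq> bad_edges E k P" and i: "i \<in> {1..k}"
  shows "card (rowset (contr_part k P Q) k i)
       + (\<Sum>j\<in>{1..k} - {i}. card (sys_edges Q \<inter> Eset E (rowset P k i) (colset P k j)))
       = card (rowset P k i)"
proof -
  let ?R = "rowset P k i" and ?S = "sys_vertices Q"
  have "finite ?R" using UN_rowset[OF kp] i assms(1) by (metis UN_upper finite_subset)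
  have "card (rowset (contr_part k P Q) k i) = card (?R - ?S) + card {q\<in>Q. last q \<in> ?R}"
    using \<open>finite ?R\<close> finite_path_system[OF ps assms(1)]
    by (simp add: rowset_contr_part[OF kp path_system_endpoints(1)[OF ps]] card_Plus[unfolded Plus_def])
  moreover have "card ?R = card (?R \<inter> ?S) + card (?R - ?S)"
    using card_Int_Diff \<open>finite ?R\<close> .
  moreover note card_Int_sys_vertices_last_fst[OF ps assms(1), of ?R]
  moreover note card_bad_edges_from_rowset[OF kp i finite_sys_edges[OF ps assms(1)] assms(4)]
  ultimately show ?thesis by simp
qed

lemma card_colset_contr_part:
  assumes "finite V" and kp: "k2_partition V k P" and ps: "path_system V E Q"
    and "sys_edges Q \<subseteq> bad_edges E k P" and i: "i \<in> {1..k}"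
  shows "card (colset (contr_part k P Q) k i)
       + (\<Sum>j\<in>{1..k} - {i}. card (sys_edges Q \<inter> Eset E (rowset P k j) (colset P k i)))
       = card (colset P k i)"
proof -
  let ?C = "colset P k i" and ?S = "sys_vertices Q"
  have "finite ?C" using UN_colset[OF kp] i assms(1) by (metis UN_upper finite_subset)
  have "card (colset (contr_part k P Q) k i) = card (?C - ?S) + card {q\<in>Q. hd q \<in> ?C}"
    using \<open>finite ?C\<close> finite_path_system[OF ps assms(1)]
    by (simp add: colset_contr_part[OF kp path_system_endpoints(2)[OF ps]] card_Plus[unfolded Plus_def])
  moreover have "card ?C = card (?C \<inter> ?S) + card (?C - ?S)"
    using card_Int_Diff \<open>finite ?C\<close> .
  moreover note card_Int_sys_vertices_hd_snd[OF ps assms(1), of ?C]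
  moreover note card_bad_edges_into_colset[OF kp i finite_sys_edges[OF ps assms(1)] assms(4)]
  ultimately show ?thesis by simp
qed

theorem lemma4p10:
  fixes V :: "'a set" and E :: "('a \<times> 'a) set" and k :: nat
    and P :: "nat \<Rightarrow> nat \<Rightarrow> 'a set" and Q :: "'a list set"
  assumes "finite V" and "E \<subseteq> V \<times> V"
    and "k2_partition V k P"
    and "path_system V E Q"
    and "sys_edges Q \<subseteq> bad_edges E k P"
    and "\<forall>i\<in>{1..k}.
           (\<Sum>j\<in>{1..k} - {i}. int (card (sys_edges Q \<inter> Eset E (rowset P k i) (colset P k j))))
         - (\<Sum>j\<in>{1..k} - {i}. int (card (sys_edges Q \<inter> Eset E (rowset P k j) (colset P k i))))
         = int (card (rowset P k i)) - int (card (colset P k i))"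
  shows "contr_E V E Q \<subseteq> contr_V V Q \<times> contr_V V Q
       \<and> k2_partition (contr_V V Q) k (contr_part k P Q)
       \<and> (\<forall>i\<in>{1..k}. card (rowset (contr_part k P Q) k i) = card (colset (contr_part k P Q) k i))"
proof (intro conjI ballI)
  show "contr_E V E Q \<subseteq> contr_V V Q \<times> contr_V V Q"
    unfolding contr_E_def by blast
  show "k2_partition (contr_V V Q) k (contr_part k P Q)"
    using k2_partition_contr_part[OF assms(3) path_system_endpoints[OF assms(4)]] .
  fix i assume i: "i \<in> {1..k}"
  show "card (rowset (contr_part k P Q) k i) = card (colset (contr_part k P Q) k i)"
    using card_rowset_contr_part[OF assms(1,3,4,5) i] card_colset_contr_part[OF assms(1,3,4,5) i]
      bspec[OF assms(6) i]
    by (simp flip: of_nat_sum)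
qed

end
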